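(* In the setting below, the group $G_M$ is isomorphic to the semi-direct product $\mathbb Z\ltimes\mathbb Z^{2n+1}$ associated with the action of $\mathbb Z$ on $\mathbb Z^{2n+1}$ in which a generator $t$ of $\mathbb Z$ acts by $t\cdot v=M^\top v$.
   Context: Let $n\ge 1$ and let $M=(m_{ij})\in SL(2n+1,\mathbb Z)$. Assume that $M$ has exactly one real eigenvalue $\alpha$, that $\alpha>0$, $\alpha\neq 1$, that $\alpha$ is a simple eigenvalue, and that the remaining eigenvalues are $\beta_1,\dots,\beta_k,\bar\beta_1,\dots,\bar\beta_k$ with $\mathrm{Im}\,\beta_j>0$. Let $W\subset\mathbb C^{2n+1}$ be the direct sum of the generalized eigenspaces of $M$ for $\beta_1,\dots,\beta_k$ (so $\dim_{\mathbb C}W=n$). Fix a real eigenvector $a=(a^{(1)},\dots,a^{(2n+1)})^\top\in\mathbb R^{2n+1}$ of $M$ for $\alpha$ and a basis $b_1,\dots,b_n$ of $W$, $b_j=(b_j^{(1)},\dots,b_j^{(2n+1)})^\top$, and let $R=(r_{\ell j})\in M_n(\mathbb C)$ be given by $Mb_j=\sum_{\ell=1}^n r_{\ell j}b_\ell$. For $i=1,\dots,2n+1$ put $u_i=(a^{(i)},b_1^{(i)},\dots,b_n^{(i)})^\top\in\mathbb R\times\mathbb C^n$. Let $\mathbb H=\{w\in\mathbb C:\mathrm{Im}\,w>0\}$, and define holomorphic automorphisms of $\mathbb H\times\mathbb C^n$ by $g_0(w,z)=(\alpha w,R^\top z)$ and $g_i(w,z)=(w,z)+u_i$ for $1\le i\le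 2n+1$. Let $G_M$ be the group generated by $g_0,\dots,g_{2n+1}$. *)

theory Defs
  imports "HOL-Analysis.Analysis" "HOL-Computational_Algebra.Polynomial"
    "HOL-Algebra.Bij" "HOL-Algebra.Generated_Groups"
begin

definition real_mat :: "int^'m^'m \<Rightarrow> real^'m^'m" where
  "real_mat M = (\<chi> i j. real_of_int (M $ i $ j))"

definition cplx_mat :: "int^'m^'m \<Rightarrow> complex^'m^'m" where
  "cplx_mat M = (\<chi> i j. complex_of_int (M $ i $ j))"

definition charpoly_c :: "int^'m^'m \<Rightarrow> complex poly" where
  "charpoly_c M = det (\<chi> i j. (if i = j then [:0, 1:] else 0) - [:complex_of_int (M $ i $ j):])"

definition is_eigenvalue_c :: "int^'m^'m \<Rightarrow> complex \<Rightarrow> bool" where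
  "is_eigenvalue_c M e \<longleftrightarrow> (\<exists>v. v \<noteq> 0 \<and> cplx_mat M *v v = e *s v)"

definition gen_eigenspace :: "int^'m^'m \<Rightarrow> complex \<Rightarrow> (complex^'m) set" where
  "gen_eigenspace M \<beta> = {v. \<exists>k. ((\<lambda>x. cplx_mat M *v x - \<beta> *s x) ^^ k) v = 0}"

definition W_space :: "int^'m^'m \<Rightarrow> (complex^'m) set" where
  "W_space M = {v. \<exists>B f. finite B \<and>
      (\<forall>\<beta>\<in>B. is_eigenvalue_c M \<beta> \<and> Im \<beta> > 0 \<and> f \<beta> \<in> gen_eigenspace M \<beta>) \<and>
      v = (\<Sum>\<beta>\<in>B. f \<beta>)}"

text \<open>The domain \<open>\<HH> \<times> \<complex>^n\<close>; points of \<open>\<complex>^n\<close> are functions \<open>nat \<Rightarrow> complex\<close>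
  vanishing from index n on (coordinates 0..n-1 correspond to 1..n).\<close>
definition HC_domain :: "nat \<Rightarrow> (complex \<times> (nat \<Rightarrow> complex)) set" where
  "HC_domain n = {(w, z). Im w > 0 \<and> (\<forall>j\<ge>n. z j = 0)}"

definition g_zero :: "nat \<Rightarrow> real \<Rightarrow> (nat \<Rightarrow> nat \<Rightarrow> complex) \<Rightarrow>
    complex \<times> (nat \<Rightarrow> complex) \<Rightarrow> complex \<times> (nat \<Rightarrow> complex)" where
  "g_zero n \<alpha> R = (\<lambda>(w, z). (complex_of_real \<alpha> * w,
       (\<lambda>j. if j < n then (\<Sum>l<n. R l j * z l) else 0)))"

definition g_trans :: "nat \<Rightarrow> real^'m \<Rightarrow> (nat \<Rightarrow> complex^'m) \<Rightarrow> 'm \<Rightarrow>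
    complex \<times> (nat \<Rightarrow> complex) \<Rightarrow> complex \<times> (nat \<Rightarrow> complex)" where
  "g_trans n a b i = (\<lambda>(w, z). (w + complex_of_real (a $ i),
       (\<lambda>j. if j < n then z j + b j $ i else 0)))"

definition G_M :: "nat \<Rightarrow> real \<Rightarrow> (nat \<Rightarrow> nat \<Rightarrow> complex) \<Rightarrow> real^'m \<Rightarrow> (nat \<Rightarrow> complex^'m) \<Rightarrow>
    (complex \<times> (nat \<Rightarrow> complex) \<Rightarrow> complex \<times> (nat \<Rightarrow> complex)) monoid" where
  "G_M n \<alpha> R a b =
     (let S = HC_domain n;
          gens = insert (restrict (g_zero n \<alpha> R) S) ((\<lambda>i. restrict (g_trans n a b i) S) ` UNIV)
      in (BijGroup S)\<lparr>carrier := generate (BijGroup S) gens\<rparr>)"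

definition mat_zpow_act :: "int^'m^'m \<Rightarrow> int \<Rightarrow> int^'m \<Rightarrow> int^'m" where
  "mat_zpow_act A k = (if k \<ge> 0 then ((\<lambda>v. A *v v) ^^ nat k)
                        else ((\<lambda>v. matrix_inv A *v v) ^^ nat (- k)))"

definition semidirect_Z :: "int^'m^'m \<Rightarrow> (int \<times> (int^'m)) monoid" where
  "semidirect_Z M = \<lparr>carrier = UNIV,
      mult = (\<lambda>(k, v) (l, w). (k + l, v + mat_zpow_act (transpose M) k w)),
      one = (0, 0)\<rparr>"

end

theory Submission
  imports Defs
begin

(* Let t_v be the translation of H x C^n by sum_i v_i u_i, for v in Z^(2n+1).
   Because M a = alpha a and M b_j = sum_l r_lj b_l, conjugating t_v by g_0 gives t_(M^T v),
   so (k, v) |-> t_v g_0^k is a homomorphism from the semidirect product onto G_M.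
   It is injective: g_0^k acts on the first coordinate by w |-> alpha^k w, which is a
   translation only for k = 0, and v |-> sum_i v_i u_i is injective on Z^(2n+1) because
   a, b_1, ..., b_n and their complex conjugates are generalized eigenvectors for
   eigenvalues that are real, in the upper and in the lower half-plane respectively,
   hence form a basis of C^(2n+1).
   That g_0 is bijective needs R invertible; its inverse comes from M^-1, which also
   preserves W. *)

section \<open>Generalized eigenspaces\<close>

definition mat_shift :: "'a::field^'m^'m \<Rightarrow> 'a \<Rightarrow> 'a^'m \<Rightarrow> 'a^'m" where
  "mat_shift C \<beta> x = C *v x - \<beta> *s x"

definition gen_eig :: "'a::field^'m^'m \<Rightarrow> 'a \<Rightarrow> ('a^'m) set" where
  "gen_eig C \<beta> = {v. \<exists>k. (mat_shift C \<beta> ^^ k) v = 0}"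

lemma funpow_commute:
  assumes "\<And>x. f (g x) = g (f x)"
  shows "f ((g ^^ k) x) = (g ^^ k) (f x)"
  by (induction k) (simp_all add: assms)

lemma linear_mat_shift_pow: "Vector_Spaces.linear (*s) (*s) (mat_shift C \<beta> ^^ k)"
proof (induction k)
  case 0
  show ?case by (simp add: vec.linear_id[unfolded id_def])
next
  case (Suc k)
  have "Vector_Spaces.linear (*s) (*s) (mat_shift C \<beta>)"
    unfolding mat_shift_def[abs_def]
    by (intro vec.linear_compose_sub vec.linear_compose_scale_right
        matrix_vector_mul_linear_gen vec.linear_ident)
  from Vector_Spaces.linear_compose[OF Suc.IH this] show ?case
    by (simp add: o_def funpow_swap1)
qed

lemma mat_shift_pow_zero [simp]: "(mat_shift C \<beta> ^^ k) 0 = 0"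
  by (rule vec.linear_0[OF linear_mat_shift_pow])

lemma mat_shift_commute: "mat_shift C \<beta> (mat_shift C \<gamma> x) = mat_shift C \<gamma> (mat_shift C \<beta> x)"
  by (simp add: mat_shift_def vec.diff vec.scale vec_eq_iff algebra_simps)

lemma gen_eig_invariant:
  assumes "\<And>x. f (mat_shift C \<beta> x) = mat_shift C \<beta> (f x)" and "f 0 = 0"
    and "v \<in> gen_eig C \<beta>"
  shows "f v \<in> gen_eig C \<beta>"
proof -
  obtain k where "(mat_shift C \<beta> ^^ k) v = 0"
    using assms(3) unfolding gen_eig_def by blast
  then have "(mat_shift C \<beta> ^^ k) (f v) = 0"
    using funpow_commute[of f "mat_shift C \<beta>", OF assms(1)] assms(2) by metis
  then show ?thesis
    unfolding gen_eig_def by blast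
qed

lemma gen_eig_mat_shift_pow_closed:
  "v \<in> gen_eig C \<beta> \<Longrightarrow> (mat_shift C \<gamma> ^^ j) v \<in> gen_eig C \<beta>"
  by (rule gen_eig_invariant)
    (simp_all add: funpow_commute[of "mat_shift C \<beta>" "mat_shift C \<gamma>", OF mat_shift_commute,
        symmetric])

lemma mat_shift_pow_eigenvector:
  assumes "mat_shift C \<gamma> v = 0"
  shows "(mat_shift C \<beta> ^^ k) v = (\<gamma> - \<beta>) ^ k *s v"
proof (induction k)
  case 0
  show ?case by simp
next
  case (Suc k)
  have "C *v v = \<gamma> *s v"
    using assms by (simp add: mat_shift_def)
  have "(mat_shift C \<beta> ^^ Suc k) v = mat_shift C \<beta> ((\<gamma> - \<beta>) ^ k *s v)"
    using Suc by simp
  also have "\<dots> = (\<gamma> - \<beta>) ^ k *s (C *v v - \<beta> *s v)"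
    by (simp add: mat_shift_def vec.scale vector_ssub_ldistrib vector_smult_assoc mult.commute)
  also have "\<dots> = (\<gamma> - \<beta>) ^ Suc k *s v"
    by (simp add: \<open>C *v v = \<gamma> *s v\<close> vec_eq_iff algebra_simps)
  finally show ?case .
qed

lemma gen_eig_mat_shift_eq_0:
  assumes "v \<in> gen_eig C \<beta>" "\<beta> \<noteq> \<gamma>" "mat_shift C \<gamma> v = 0"
  shows "v = 0"
proof -
  obtain k where "(mat_shift C \<beta> ^^ k) v = 0"
    using assms(1) unfolding gen_eig_def by blast
  then have "(\<gamma> - \<beta>) ^ k *s v = 0"
    by (simp add: mat_shift_pow_eigenvector[OF assms(3)])
  then show ?thesis
    using assms(2) by (simp add: vector_mul_eq_0)
qed

lemma gen_eig_mat_shift_pow_eq_0: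
  "v \<in> gen_eig C \<beta> \<Longrightarrow> \<beta> \<noteq> \<gamma> \<Longrightarrow> (mat_shift C \<gamma> ^^ j) v = 0 \<Longrightarrow> v = 0"
proof (induction j arbitrary: v)
  case 0
  then show ?case by simp
next
  case (Suc j)
  have "(mat_shift C \<gamma> ^^ j) (mat_shift C \<gamma> v) = 0"
    using Suc.prems(3) by (simp add: funpow_swap1)
  moreover have "mat_shift C \<gamma> v \<in> gen_eig C \<beta>"
    using gen_eig_mat_shift_pow_closed[OF Suc.prems(1), where \<gamma> = \<gamma> and j = 1] by simp
  ultimately have "mat_shift C \<gamma> v = 0"
    using Suc.IH Suc.prems(2) by blast
  then show ?case
    by (rule gen_eig_mat_shift_eq_0[OF Suc.prems(1,2)])
qed

lemma gen_eig_independent: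
  assumes "finite B" "\<forall>\<beta>\<in>B. f \<beta> \<in> gen_eig C \<beta>" "(\<Sum>\<beta>\<in>B. f \<beta>) = 0"
  shows "\<forall>\<beta>\<in>B. f \<beta> = 0"
  using assms
proof (induction B arbitrary: f rule: finite_induct)
  case empty
  then show ?case by simp
next
  case (insert \<beta>0 B)
  obtain k where k: "(mat_shift C \<beta>0 ^^ k) (f \<beta>0) = 0"
    using insert.prems(1) unfolding gen_eig_def by blast
  \<comment> \<open>This power of \<open>C - \<beta>0\<close> kills f \<beta>0 and is injective on the other generalized eigenspaces.\<close>
  let ?g = "\<lambda>\<beta>. (mat_shift C \<beta>0 ^^ k) (f \<beta>)"
  have "?g \<beta>0 + (\<Sum>\<beta>\<in>B. ?g \<beta>) = (mat_shift C \<beta>0 ^^ k) (\<Sum>\<beta>\<in>insert \<beta>0 B. f \<beta>)"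
    using insert.hyps by (simp add: vec.linear_sum[OF linear_mat_shift_pow]
        vec.linear_add[OF linear_mat_shift_pow])
  then have "(\<Sum>\<beta>\<in>B. ?g \<beta>) = 0"
    using insert.prems(2) k by simp
  moreover have "\<forall>\<beta>\<in>B. ?g \<beta> \<in> gen_eig C \<beta>"
    using insert.prems(1) gen_eig_mat_shift_pow_closed by blast
  ultimately have "\<forall>\<beta>\<in>B. ?g \<beta> = 0"
    using insert.IH[of ?g] by blast
  then have B0: "\<forall>\<beta>\<in>B. f \<beta> = 0"
    using insert.hyps(2) insert.prems(1) gen_eig_mat_shift_pow_eq_0 by (metis insertCI)
  then have "f \<beta>0 = 0"
    using insert.prems(2) insert.hyps by simp
  with B0 show ?case by blast
qed

lemma gen_eig_zero [simp]: "0 \<in> gen_eig C \<beta>"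
  unfolding gen_eig_def by simp

lemma gen_eig_add:
  assumes "v \<in> gen_eig C \<beta>" "w \<in> gen_eig C \<beta>"
  shows "v + w \<in> gen_eig C \<beta>"
proof -
  obtain k l where k: "(mat_shift C \<beta> ^^ k) v = 0" and l: "(mat_shift C \<beta> ^^ l) w = 0"
    using assms unfolding gen_eig_def by blast
  have "(mat_shift C \<beta> ^^ (k + l)) v = (mat_shift C \<beta> ^^ l) ((mat_shift C \<beta> ^^ k) v)"
    by (simp only: add.commute[of k l] funpow_add comp_apply)
  moreover have "(mat_shift C \<beta> ^^ (k + l)) w = (mat_shift C \<beta> ^^ k) ((mat_shift C \<beta> ^^ l) w)"
    by (simp only: funpow_add comp_apply)
  ultimately have "(mat_shift C \<beta> ^^ (k + l)) v = 0" "(mat_shift C \<beta> ^^ (k + l)) w = 0"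
    using k l by simp_all
  then have "(mat_shift C \<beta> ^^ (k + l)) (v + w) = 0"
    by (simp add: vec.linear_add[OF linear_mat_shift_pow])
  then show ?thesis
    unfolding gen_eig_def by blast
qed

lemma gen_eig_scale: "v \<in> gen_eig C \<beta> \<Longrightarrow> c *s v \<in> gen_eig C \<beta>"
  by (rule gen_eig_invariant) (simp_all add: mat_shift_def vec.scale vector_ssub_ldistrib
      vector_smult_assoc mult.commute)

definition gen_eig_sum :: "'a::field^'m^'m \<Rightarrow> 'a set \<Rightarrow> ('a^'m) set" where
  "gen_eig_sum C \<Lambda> = {v. \<exists>B f. finite B \<and> B \<subseteq> \<Lambda> \<and> (\<forall>\<beta>\<in>B. f \<beta> \<in> gen_eig C \<beta>) \<and> v = sum f B}"

lemma gen_eig_sum_zero: "0 \<in> gen_eig_sum C \<Lambda>"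
  unfolding gen_eig_sum_def by (rule CollectI, rule exI[of _ "{}"]) simp

lemma gen_eig_in_gen_eig_sum: "\<beta> \<in> \<Lambda> \<Longrightarrow> v \<in> gen_eig C \<beta> \<Longrightarrow> v \<in> gen_eig_sum C \<Lambda>"
  unfolding gen_eig_sum_def by (rule CollectI, rule exI[of _ "{\<beta>}"], rule exI[of _ "\<lambda>_. v"]) simp

lemma gen_eig_sum_add:
  assumes "x \<in> gen_eig_sum C \<Lambda>" "y \<in> gen_eig_sum C \<Lambda>'"
  shows "x + y \<in> gen_eig_sum C (\<Lambda> \<union> \<Lambda>')"
proof -
  obtain B f where B: "finite B" "B \<subseteq> \<Lambda>" "\<forall>\<beta>\<in>B. f \<beta> \<in> gen_eig C \<beta>" "x = sum f B"
    using assms(1) unfolding gen_eig_sum_def by blast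
  obtain B' g where B': "finite B'" "B' \<subseteq> \<Lambda>'" "\<forall>\<beta>\<in>B'. g \<beta> \<in> gen_eig C \<beta>" "y = sum g B'"
    using assms(2) unfolding gen_eig_sum_def by blast
  define h where "h \<beta> = (if \<beta> \<in> B then f \<beta> else 0) + (if \<beta> \<in> B' then g \<beta> else 0)" for \<beta>
  have fin: "finite (B \<union> B')"
    using B(1) B'(1) by simp
  have "sum h (B \<union> B') = sum f ((B \<union> B') \<inter> B) + sum g ((B \<union> B') \<inter> B')"
    unfolding h_def sum.distrib sum.inter_restrict[OF fin] ..
  also have "\<dots> = x + y"
    using B(4) B'(4) by (simp add: Int_absorb1)
  finally have "sum h (B \<union> B') = x + y" .
  moreover have "\<forall>\<beta>\<in>B \<union> B'. h \<beta> \<in> gen_eig C \<beta>"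
    using B(3) B'(3) by (simp add: h_def gen_eig_add)
  ultimately show ?thesis
    unfolding gen_eig_sum_def using fin B(2) B'(2)
    by (intro CollectI exI[of _ "B \<union> B'"] exI[of _ h]) auto
qed

lemma gen_eig_sum_scale:
  assumes "x \<in> gen_eig_sum C \<Lambda>"
  shows "c *s x \<in> gen_eig_sum C \<Lambda>"
proof -
  obtain B f where B: "finite B" "B \<subseteq> \<Lambda>" "\<forall>\<beta>\<in>B. f \<beta> \<in> gen_eig C \<beta>" "x = sum f B"
    using assms unfolding gen_eig_sum_def by blast
  then have "c *s x = (\<Sum>\<beta>\<in>B. c *s f \<beta>)" "\<forall>\<beta>\<in>B. c *s f \<beta> \<in> gen_eig C \<beta>"
    by (simp_all add: vec.scale_sum_right gen_eig_scale)
  with B(1,2) show ?thesis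
    unfolding gen_eig_sum_def by (intro CollectI exI[of _ B] exI[of _ "\<lambda>\<beta>. c *s f \<beta>"]) auto
qed

lemma gen_eig_sum_sum:
  "(\<And>j. j \<in> J \<Longrightarrow> g j \<in> gen_eig_sum C \<Lambda>) \<Longrightarrow> sum g J \<in> gen_eig_sum C \<Lambda>"
proof (induction J rule: infinite_finite_induct)
  case (insert j J)
  then show ?case
    using gen_eig_sum_add[of "g j" C \<Lambda> "sum g J" \<Lambda>] by simp
qed (simp_all add: gen_eig_sum_zero)

lemma gen_eig_sum_disjoint:
  assumes "x \<in> gen_eig_sum C \<Lambda>" "y \<in> gen_eig_sum C \<Lambda>'" "\<Lambda> \<inter> \<Lambda>' = {}" "x + y = 0"
  shows "x = 0"
proof -
  obtain B f where B: "finite B" "B \<subseteq> \<Lambda>" "\<forall>\<beta>\<in>B. f \<beta> \<in> gen_eig C \<beta>" "x = sum f B"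
    using assms(1) unfolding gen_eig_sum_def by blast
  obtain B' g where B': "finite B'" "B' \<subseteq> \<Lambda>'" "\<forall>\<beta>\<in>B'. g \<beta> \<in> gen_eig C \<beta>" "y = sum g B'"
    using assms(2) unfolding gen_eig_sum_def by blast
  define h where "h \<beta> = (if \<beta> \<in> B then f \<beta> else g \<beta>)" for \<beta>
  have disj: "B \<inter> B' = {}"
    using B(2) B'(2) assms(3) by blast
  have "sum h (B \<union> B') = sum h B + sum h B'"
    using B(1) B'(1) disj by (rule sum.union_disjoint)
  also have "sum h B = x"
    unfolding B(4) h_def by (rule sum.cong) auto
  also have "sum h B' = y"
    unfolding B'(4) h_def using disj by (intro sum.cong) auto
  finally have "sum h (B \<union> B') = 0"
    using assms(4) by simp
  moreover have "\<forall>\<beta>\<in>B \<union> B'. h \<beta> \<in> gen_eig C \<beta>"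
    using B(3) B'(3) by (auto simp: h_def)
  ultimately have "\<forall>\<beta>\<in>B \<union> B'. h \<beta> = 0"
    using B(1) B'(1) by (intro gen_eig_independent) auto
  then have "\<forall>\<beta>\<in>B. f \<beta> = 0"
    by (metis UnI1 h_def)
  then show ?thesis
    using B(4) by simp
qed

lemma gen_eig_sum_invariant:
  assumes "D ** C = C ** D" and "x \<in> gen_eig_sum C \<Lambda>"
  shows "D *v x \<in> gen_eig_sum C \<Lambda>"
proof -
  have commute: "D *v mat_shift C \<beta> y = mat_shift C \<beta> (D *v y)" for \<beta> y
    by (simp add: mat_shift_def matrix_vector_mul_assoc assms(1) vec.diff vec.scale)
  obtain B f where B: "finite B" "B \<subseteq> \<Lambda>" "\<forall>\<beta>\<in>B. f \<beta> \<in> gen_eig C \<beta>" "x = sum f B"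
    using assms(2) unfolding gen_eig_sum_def by blast
  have "D *v x = (\<Sum>\<beta>\<in>B. D *v f \<beta>)"
    using B(4) by (simp add: vec.sum)
  moreover have "\<forall>\<beta>\<in>B. D *v f \<beta> \<in> gen_eig C \<beta>"
    using B(3) by (auto intro: gen_eig_invariant commute)
  ultimately show ?thesis
    unfolding gen_eig_sum_def using B(1,2)
    by (intro CollectI exI[of _ B] exI[of _ "\<lambda>\<beta>. D *v f \<beta>"]) auto
qed

definition vec_cnj :: "complex^'m \<Rightarrow> complex^'m" where
  "vec_cnj v = (\<chi> i. cnj (v $ i))"

lemma vec_cnj_eq_0_iff [simp]: "vec_cnj v = 0 \<longleftrightarrow> v = 0"
  by (simp add: vec_cnj_def vec_eq_iff)

lemma vec_cnj_sum: "vec_cnj (sum f A) = (\<Sum>x\<in>A. vec_cnj (f x))"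
  by (induction A rule: infinite_finite_induct) (simp_all add: vec_cnj_def vec_eq_iff)

lemma vec_cnj_scale: "vec_cnj (c *s v) = cnj c *s vec_cnj v"
  by (simp add: vec_cnj_def vec_eq_iff)

lemma mat_shift_pow_vec_cnj:
  assumes "\<And>i j. cnj (C $ i $ j) = C $ i $ j"
  shows "(mat_shift C (cnj \<beta>) ^^ k) (vec_cnj v) = vec_cnj ((mat_shift C \<beta> ^^ k) v)"
proof (induction k)
  case (Suc k)
  have "mat_shift C (cnj \<beta>) (vec_cnj w) = vec_cnj (mat_shift C \<beta> w)" for w
    using assms by (simp add: mat_shift_def vec_cnj_def vec_eq_iff matrix_vector_mult_def cnj_sum)
  with Suc show ?case by simp
qed simp

lemma gen_eig_vec_cnj:
  assumes "\<And>i j. cnj (C $ i $ j) = C $ i $ j" and "v \<in> gen_eig C \<beta>"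
  shows "vec_cnj v \<in> gen_eig C (cnj \<beta>)"
  using assms(2) unfolding gen_eig_def by (auto simp: mat_shift_pow_vec_cnj[OF assms(1)])

lemma gen_eig_sum_vec_cnj:
  assumes "\<And>i j. cnj (C $ i $ j) = C $ i $ j" and "x \<in> gen_eig_sum C \<Lambda>"
  shows "vec_cnj x \<in> gen_eig_sum C (cnj ` \<Lambda>)"
proof -
  obtain B f where B: "finite B" "B \<subseteq> \<Lambda>" "\<forall>\<beta>\<in>B. f \<beta> \<in> gen_eig C \<beta>" "x = sum f B"
    using assms(2) unfolding gen_eig_sum_def by blast
  have "vec_cnj x = (\<Sum>\<beta>\<in>cnj ` B. vec_cnj (f (cnj \<beta>)))"
    using B(4) by (simp add: vec_cnj_sum sum.reindex inj_on_def)
  moreover have "\<forall>\<beta>\<in>cnj ` B. vec_cnj (f (cnj \<beta>)) \<in> gen_eig C \<beta>"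
    using B(3) gen_eig_vec_cnj[OF assms(1)] by auto
  ultimately show ?thesis
    unfolding gen_eig_sum_def using B(1,2)
    by (intro CollectI exI[of _ "cnj ` B"] exI[of _ "\<lambda>\<beta>. vec_cnj (f (cnj \<beta>))"]) auto
qed

lemma real_gen_eig_direct_sum:
  fixes C :: "complex^'m^'m"
  assumes real: "\<And>i j. cnj (C $ i $ j) = C $ i $ j"
    and "Im \<alpha> = 0" and upper: "\<And>\<beta>. \<beta> \<in> \<Lambda> \<Longrightarrow> Im \<beta> > 0"
    and "v \<in> gen_eig C \<alpha>" "x \<in> gen_eig_sum C \<Lambda>" "y \<in> gen_eig_sum C \<Lambda>"
    and "v + x + vec_cnj y = 0"
  shows "v = 0 \<and> x = 0 \<and> y = 0"
proof -
  have lower: "Im \<beta> < 0" if "\<beta> \<in> cnj ` \<Lambda>" for \<beta>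
    using that upper by auto
  have disj: "\<Lambda> \<inter> cnj ` \<Lambda> = {}"
    using upper lower by (meson disjoint_iff order.asym)
  have "\<alpha> \<notin> \<Lambda> \<union> cnj ` \<Lambda>"
    using upper lower \<open>Im \<alpha> = 0\<close> by (metis Un_iff less_irrefl)
  then have disj_\<alpha>: "{\<alpha>} \<inter> (\<Lambda> \<union> cnj ` \<Lambda>) = {}"
    by blast
  have v: "v \<in> gen_eig_sum C {\<alpha>}"
    using assms(4) by (simp add: gen_eig_in_gen_eig_sum)
  have y: "vec_cnj y \<in> gen_eig_sum C (cnj ` \<Lambda>)"
    using real assms(6) by (rule gen_eig_sum_vec_cnj)
  have xy: "x + vec_cnj y \<in> gen_eig_sum C (\<Lambda> \<union> cnj ` \<Lambda>)"
    using assms(5) y by (rule gen_eig_sum_add)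
  have "v + (x + vec_cnj y) = 0"
    using assms(7) by (simp add: add.assoc)
  then have "v = 0"
    by (rule gen_eig_sum_disjoint[OF v xy disj_\<alpha>])
  with assms(7) have "x + vec_cnj y = 0"
    by simp
  then have "x = 0"
    by (rule gen_eig_sum_disjoint[OF assms(5) y disj])
  with \<open>v = 0\<close> \<open>x + vec_cnj y = 0\<close> show ?thesis
    by simp
qed

section \<open>Integer vectors and matrices\<close>

lemma sum_lessThan_add: "(\<Sum>i<m + k. f i) = (\<Sum>i<m. f i) + (\<Sum>i<k. f (m + i))" for m k :: nat
  by (induction k) (simp_all add: add.assoc)

lemma span_image_eq_UNIV:
  fixes f :: "'i \<Rightarrow> 'a::field^'m"
  assumes "finite I" "card I = CARD('m)"
    and indep: "\<And>c. (\<Sum>i\<in>I. c i *s f i) = 0 \<Longrightarrow> \<forall>i\<in>I. c i = 0"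
  shows "vec.span (f ` I) = UNIV"
proof -
  have inj: "inj_on f I"
  proof (rule inj_onI, rule ccontr)
    fix i j
    assume ij: "i \<in> I" "j \<in> I" "f i = f j" "i \<noteq> j"
    define c where "c k = (if k = i then 1 else if k = j then -1 else (0::'a))" for k
    have "(\<Sum>k\<in>I. c k *s f k) = (\<Sum>k\<in>I. (if k = i then f i else 0) - (if k = j then f j else 0))"
      using ij by (intro sum.cong) (auto simp: c_def vector_smult_lneg)
    also have "\<dots> = 0"
      using ij \<open>finite I\<close> by (simp add: sum_subtractf)
    finally have "c i = 0"
      using indep ij(1) by blast
    then show False
      by (simp add: c_def)
  qed
  have "vec.independent (f ` I)"
  proof
    assume "vec.dependent (f ` I)"
    then obtain u where u: "\<exists>v\<in>f ` I. u v \<noteq> 0" "(\<Sum>v\<in>f ` I. u v *s v) = 0"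
      using \<open>finite I\<close> by (auto simp: vec.dependent_finite)
    then have "(\<Sum>i\<in>I. u (f i) *s f i) = 0"
      by (simp add: sum.reindex[OF inj])
    then show False
      using indep[of "\<lambda>i. u (f i)"] u(1) by auto
  qed
  moreover have "card (f ` I) = vec.dim (UNIV :: ('a^'m) set)"
    using card_image[OF inj] assms(2) by (simp add: card_cart_basis)
  ultimately show ?thesis
    using vec.card_eq_dim[of "f ` I" UNIV] \<open>finite I\<close> by auto
qed

lemma coefficient_matrix_mult:
  fixes A B :: "'a::field^'m^'m" and n :: nat
  assumes indep: "\<And>c. (\<Sum>j<n. c j *s b j) = 0 \<Longrightarrow> \<forall>j<n. c j = 0"
    and X: "\<And>j. j < n \<Longrightarrow> A *v b j = (\<Sum>l<n. X l j *s b l)"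
    and Y: "\<And>j. j < n \<Longrightarrow> B *v b j = (\<Sum>l<n. Y l j *s b l)"
    and inverse: "A ** B = mat 1" and "k < n" "j < n"
  shows "(\<Sum>l<n. X k l * Y l j) = (if k = j then 1 else 0)"
proof -
  have "b j = A *v (B *v b j)"
    by (simp add: matrix_vector_mul_assoc inverse)
  also have "\<dots> = (\<Sum>l<n. Y l j *s (A *v b l))"
    using \<open>j < n\<close> by (simp add: Y vec.sum vec.scale)
  also have "\<dots> = (\<Sum>l<n. Y l j *s (\<Sum>k<n. X k l *s b k))"
    by (intro sum.cong) (simp_all add: X)
  also have "\<dots> = (\<Sum>l<n. \<Sum>k<n. (X k l * Y l j) *s b k)"
    by (simp add: vec.scale_sum_right vector_smult_assoc mult.commute)
  also have "\<dots> = (\<Sum>k<n. (\<Sum>l<n. X k l * Y l j) *s b k)"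
    by (subst sum.swap) (simp add: vec.scale_sum_left)
  finally have bj: "b j = (\<Sum>k<n. (\<Sum>l<n. X k l * Y l j) *s b k)" .
  have "(\<Sum>k<n. (if k = j then 1 else 0) *s b k) = (\<Sum>k<n. if k = j then b k else 0)"
    by (intro sum.cong) auto
  also have "\<dots> = b j"
    using \<open>j < n\<close> by (subst sum.delta) auto
  finally have delta: "(\<Sum>k<n. (if k = j then 1 else 0) *s b k) = b j" .
  have "(\<Sum>k<n. ((\<Sum>l<n. X k l * Y l j) - (if k = j then 1 else 0)) *s b k)
      = (\<Sum>k<n. (\<Sum>l<n. X k l * Y l j) *s b k) - (\<Sum>k<n. (if k = j then 1 else 0) *s b k)"
    by (simp only: vector_sub_rdistrib sum_subtractf)
  also have "\<dots> = 0"
    by (simp only: bj[symmetric] delta diff_self)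
  finally have "\<forall>k<n. (\<Sum>l<n. X k l * Y l j) - (if k = j then 1 else 0) = 0"
    by (rule indep)
  with \<open>k < n\<close> show ?thesis
    by (simp split: if_splits)
qed

definition int_pairing :: "int^'m \<Rightarrow> 'a::comm_ring_1^'m \<Rightarrow> 'a" where
  "int_pairing v x = (\<Sum>i\<in>UNIV. of_int (v $ i) * x $ i)"

lemma int_pairing_add: "int_pairing (v + w) x = int_pairing v x + int_pairing w x"
  by (simp add: int_pairing_def sum.distrib algebra_simps)

lemma int_pairing_zero [simp]: "int_pairing 0 x = 0"
  by (simp add: int_pairing_def)

lemma int_pairing_axis_left [simp]: "int_pairing (axis i 1) x = x $ i"
proof -
  have "int_pairing (axis i 1) x = (\<Sum>j\<in>UNIV. if j = i then x $ i else 0)"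
    unfolding int_pairing_def by (intro sum.cong) (auto simp: axis_def)
  then show ?thesis
    by simp
qed

lemma int_pairing_axis_right [simp]: "int_pairing v (axis i 1) = of_int (v $ i)"
proof -
  have "int_pairing v (axis i 1) = (\<Sum>j\<in>UNIV. if j = i then of_int (v $ i) else 0)"
    unfolding int_pairing_def by (intro sum.cong) (auto simp: axis_def)
  then show ?thesis
    by simp
qed

lemma int_pairing_sum_right:
  "int_pairing v (\<Sum>l\<in>L. c l *s x l) = (\<Sum>l\<in>L. c l * int_pairing v (x l))"
proof -
  have "int_pairing v (\<Sum>l\<in>L. c l *s x l) = (\<Sum>i\<in>UNIV. \<Sum>l\<in>L. c l * (of_int (v $ i) * x l $ i))"
    by (simp add: int_pairing_def sum_component sum_distrib_left algebra_simps)
  also have "\<dots> = (\<Sum>l\<in>L. \<Sum>i\<in>UNIV. c l * (of_int (v $ i) * x l $ i))"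
    by (rule sum.swap)
  finally show ?thesis
    by (simp add: int_pairing_def sum_distrib_left)
qed

lemma int_pairing_transpose:
  "int_pairing (transpose A *v v) x = int_pairing v ((\<chi> i j. of_int (A $ i $ j)) *v x)"
proof -
  have "int_pairing (transpose A *v v) x
      = (\<Sum>i\<in>UNIV. \<Sum>k\<in>UNIV. of_int (v $ k) * (of_int (A $ k $ i) * x $ i))"
    by (simp add: int_pairing_def matrix_vector_mult_def transpose_def of_int_sum
        sum_distrib_left sum_distrib_right algebra_simps)
  also have "\<dots> = (\<Sum>k\<in>UNIV. of_int (v $ k) * (\<Sum>i\<in>UNIV. of_int (A $ k $ i) * x $ i))"
    by (subst sum.swap) (simp add: sum_distrib_left)
  also have "\<dots> = int_pairing v ((\<chi> i j. of_int (A $ i $ j)) *v x)"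
    by (simp add: int_pairing_def matrix_vector_mult_def)
  finally show ?thesis .
qed

lemma int_pairing_vec_cnj: "int_pairing v (vec_cnj x) = cnj (int_pairing v x)"
  by (simp add: int_pairing_def vec_cnj_def cnj_sum)

lemma int_pairing_of_real:
  "int_pairing v (\<chi> i. complex_of_real (a $ i)) = complex_of_real (int_pairing v a)"
  by (simp add: int_pairing_def of_real_sum)

lemma int_pairing_eq_0_imp_zero:
  fixes S :: "('a::field_char_0^'m) set"
  assumes "vec.span S = UNIV" and "\<And>x. x \<in> S \<Longrightarrow> int_pairing v x = 0"
  shows "v = 0"
proof -
  have "vec.subspace {x :: 'a^'m. int_pairing v x = 0}"
    by (simp add: vec.subspace_def int_pairing_def sum.distrib algebra_simps
        flip: sum_distrib_left)
  then have "vec.span S \<subseteq> {x. int_pairing v x = 0}"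
    using assms(2) by (intro vec.span_minimal) auto
  then have "int_pairing v (axis i (1::'a)) = 0" for i
    using assms(1) by blast
  then show ?thesis
    by (simp add: vec_eq_iff)
qed

lemma int_vec_induct [case_names zero add neg axis]:
  fixes P :: "int^'m \<Rightarrow> bool"
  assumes zero: "P 0" and add: "\<And>v w. P v \<Longrightarrow> P w \<Longrightarrow> P (v + w)"
    and neg: "\<And>v. P v \<Longrightarrow> P (- v)" and axis: "\<And>i. P (axis i 1)"
  shows "P v"
proof -
  have multiple: "P (c *s axis i 1)" for c i
  proof (induction c rule: int_induct[where k = 0])
    case base
    then show ?case using zero by simp
  next
    case (step1 c)
    have "(c + 1) *s axis i 1 = c *s axis i 1 + axis i 1"
      by (simp add: vector_sadd_rdistrib)
    then show ?case
      using add[OF step1(2) axis] by simp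
  next
    case (step2 c)
    have "(c - 1) *s axis i 1 = c *s axis i 1 + - axis i 1"
      by (simp add: vector_sub_rdistrib)
    then show ?case
      using add[OF step2(2) neg[OF axis]] by simp
  qed
  have "P (\<Sum>i\<in>A. v $ i *s axis i 1)" for A
    by (induction A rule: infinite_finite_induct) (simp_all add: zero add multiple)
  then show ?thesis
    using basis_expansion[of v] by metis
qed

lemma det_cplx_mat: "det (cplx_mat A) = of_int (det A)"
  by (simp add: cplx_mat_def det_def of_int_sum of_int_mult of_int_prod)

lemma invertible_if_det_eq_1:
  fixes A :: "int^'n^'n"
  assumes "det A = 1"
  shows "invertible A"
proof -
  let ?C = "cplx_mat A"
  have det_C: "det ?C = 1"
    using assms by (simp add: det_cplx_mat)
  then have "invertible ?C"
    by (simp add: invertible_det_nz)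
  then obtain D where D: "?C ** D = mat 1" "D ** ?C = mat 1"
    unfolding invertible_def by blast
  define E :: "'n \<Rightarrow> 'n \<Rightarrow> int^'n^'n" where
    "E k j = (\<chi> i l. if l = k then (if i = j then 1 else 0) else A $ i $ l)" for k j
  define B :: "int^'n^'n" where "B = (\<chi> k j. det (E k j))"
  \<comment> \<open>Cramer's rule: the entries of the complex inverse are integer determinants.\<close>
  have "D $ k $ j = cplx_mat B $ k $ j" for k j
  proof -
    have Cx: "?C *v column j D = (\<chi> i. if i = j then 1 else 0)"
      using D(1) by (simp add: vec_eq_iff matrix_matrix_mult_def matrix_vector_mult_def
          column_def mat_def)
    have "(\<chi> i l. if l = k then (?C *v column j D) $ i else ?C $ i $ l) = cplx_mat (E k j)"
      unfolding Cx by (simp add: vec_eq_iff cplx_mat_def E_def)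
    then have "column j D $ k = det (cplx_mat (E k j))"
      using cramer_lemma[where A = ?C and k = k and x = "column j D"] det_C by simp
    then show ?thesis
      using det_cplx_mat[of "E k j"] by (simp add: B_def cplx_mat_def column_def)
  qed
  then have "cplx_mat B = D"
    by (simp add: vec_eq_iff)
  then have "cplx_mat (A ** B) = cplx_mat (mat 1)" "cplx_mat (B ** A) = cplx_mat (mat 1)"
    using D by (simp_all add: cplx_mat_def matrix_matrix_mult_def mat_def vec_eq_iff)
  then have "A ** B = mat 1" "B ** A = mat 1"
    by (simp_all add: cplx_mat_def vec_eq_iff)
  then show ?thesis
    unfolding invertible_def by blast
qed

lemma cnj_cplx_mat: "cnj (cplx_mat M $ i $ j) = cplx_mat M $ i $ j"
  by (simp add: cplx_mat_def)

lemma gen_eigenspace_eq: "gen_eigenspace M \<beta> = gen_eig (cplx_mat M) \<beta>"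
  by (simp add: gen_eigenspace_def gen_eig_def mat_shift_def[abs_def])

lemma W_space_eq: "W_space M = gen_eig_sum (cplx_mat M) {\<beta>. is_eigenvalue_c M \<beta> \<and> Im \<beta> > 0}"
  unfolding W_space_def gen_eig_sum_def gen_eigenspace_eq by blast

section \<open>Semidirect products inside a group\<close>

lemma funpow_inverse:
  fixes f g :: "'a \<Rightarrow> 'a"
  assumes "\<And>x. f (g x) = x"
  shows "(f ^^ m) ((g ^^ m) x) = x"
proof (induction m arbitrary: x)
  case (Suc m)
  have "(f ^^ Suc m) ((g ^^ Suc m) x) = f ((f ^^ m) ((g ^^ m) (g x)))"
    by (simp add: funpow_swap1)
  also have "\<dots> = x"
    using Suc.IH assms by simp
  finally show ?case .
qed simp

lemma is_iso_of_bij_hom: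
  assumes hom: "h \<in> hom H G" and bij: "bij_betw h (carrier H) (carrier G)"
    and closed: "\<And>x y. x \<in> carrier H \<Longrightarrow> y \<in> carrier H \<Longrightarrow> x \<otimes>\<^bsub>H\<^esub> y \<in> carrier H"
  shows "G \<cong> H"
proof -
  let ?g = "inv_into (carrier H) h"
  have bij_g: "bij_betw ?g (carrier G) (carrier H)"
    using bij by (rule bij_betw_inv_into)
  have "?g (x \<otimes>\<^bsub>G\<^esub> y) = ?g x \<otimes>\<^bsub>H\<^esub> ?g y" if "x \<in> carrier G" "y \<in> carrier G" for x y
  proof -
    have "x \<in> h ` carrier H" "y \<in> h ` carrier H"
      using bij that by (simp_all add: bij_betw_def)
    then obtain p q where pq: "p \<in> carrier H" "q \<in> carrier H" "x = h p" "y = h q"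
      by blast
    then have "x \<otimes>\<^bsub>G\<^esub> y = h (p \<otimes>\<^bsub>H\<^esub> q)"
      using hom by (simp add: hom_mult)
    moreover have "inj_on h (carrier H)"
      using bij by (simp add: bij_betw_def)
    ultimately show ?thesis
      using pq closed by (simp add: inv_into_f_f)
  qed
  moreover have "?g \<in> carrier G \<rightarrow> carrier H"
    using bij_betwE[OF bij_g] by blast
  ultimately have "?g \<in> hom G H"
    unfolding hom_def by blast
  with bij_g show ?thesis
    unfolding is_iso_def iso_def by blast
qed

text \<open>Since \<^const>\<open>semidirect_Z\<close> M lets the generator act by the transpose of M, the matrix T
  below corresponds to the transpose of M.\<close>

locale semidirect_rep = group G for G (structure) +
  fixes T :: "int^'m^'m" and \<tau> :: "int^'m \<Rightarrow> 'g" and g :: 'g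
  assumes invertible_T: "invertible T"
    and \<tau>_closed [simp]: "\<tau> v \<in> carrier G"
    and \<tau>_add: "\<tau> (v + w) = \<tau> v \<otimes> \<tau> w"
    and g_closed [simp]: "g \<in> carrier G"
    and g_\<tau>_commute: "g \<otimes> \<tau> w = \<tau> (T *v w) \<otimes> g"
begin

definition rep :: "int \<times> (int^'m) \<Rightarrow> 'g" where
  "rep x = \<tau> (snd x) \<otimes> g [^] fst x"

lemma \<tau>_zero: "\<tau> 0 = \<one>"
  using \<tau>_add[of 0 0] by simp

lemma inv_\<tau>: "inv (\<tau> v) = \<tau> (- v)"
  by (rule inv_equality) (simp_all add: \<tau>_add[symmetric] \<tau>_zero)

lemma pow_\<tau>_commute_nat: "g [^] (m::nat) \<otimes> \<tau> w = \<tau> (((*v) T ^^ m) w) \<otimes> g [^] m"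
proof (induction m arbitrary: w)
  case (Suc m)
  have "g [^] Suc m \<otimes> \<tau> w = g [^] m \<otimes> \<tau> (T *v w) \<otimes> g"
    by (simp add: g_\<tau>_commute m_assoc)
  also have "\<dots> = \<tau> (((*v) T ^^ Suc m) w) \<otimes> g [^] Suc m"
    by (simp add: Suc.IH m_assoc funpow_swap1)
  finally show ?case .
qed simp

lemma pow_\<tau>_commute: "g [^] (k::int) \<otimes> \<tau> w = \<tau> (mat_zpow_act T k w) \<otimes> g [^] k"
proof (cases k rule: int_cases2)
  case (nonneg m)
  then show ?thesis
    by (simp add: mat_zpow_act_def int_pow_int pow_\<tau>_commute_nat)
next
  case (nonpos m)
  define w' where "w' = ((*v) (matrix_inv T) ^^ m) w"
  let ?h = "g [^] m"
  have "T ** matrix_inv T = mat 1"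
    using invertible_T unfolding invertible_def matrix_inv_def by (rule someI_ex[THEN conjunct1])
  have "((*v) T ^^ m) w' = w"
    unfolding w'_def
    by (rule funpow_inverse) (simp add: matrix_vector_mul_assoc \<open>T ** matrix_inv T = mat 1\<close>)
  then have "?h \<otimes> \<tau> w' = \<tau> w \<otimes> ?h"
    using pow_\<tau>_commute_nat[of m w'] by simp
  then have "\<tau> w = ?h \<otimes> \<tau> w' \<otimes> inv ?h"
    by (simp add: m_assoc)
  then have "inv ?h \<otimes> \<tau> w = \<tau> w' \<otimes> inv ?h"
    by (simp add: inv_solve_left' m_assoc)
  moreover have "mat_zpow_act T k w = w'"
    using nonpos by (cases "m = 0") (simp_all add: mat_zpow_act_def w'_def)
  ultimately show ?thesis
    using nonpos by (simp add: int_pow_neg_int)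
qed

lemma rep_mult: "rep (x \<otimes>\<^bsub>semidirect_Z (transpose T)\<^esub> y) = rep x \<otimes> rep y"
proof -
  obtain k v l w where xy: "x = (k, v)" "y = (l, w)"
    by (cases x, cases y)
  have "rep (x \<otimes>\<^bsub>semidirect_Z (transpose T)\<^esub> y) = \<tau> v \<otimes> \<tau> (mat_zpow_act T k w) \<otimes> g [^] k \<otimes> g [^] l"
    by (simp add: xy semidirect_Z_def rep_def \<tau>_add int_pow_mult m_assoc)
  also have "\<dots> = \<tau> v \<otimes> (g [^] k \<otimes> \<tau> w) \<otimes> g [^] l"
    by (simp add: pow_\<tau>_commute m_assoc)
  also have "\<dots> = rep x \<otimes> rep y"
    by (simp add: xy rep_def m_assoc)
  finally show ?thesis .
qed

lemma rep_hom: "rep \<in> hom (semidirect_Z (transpose T)) G"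
proof -
  have "rep x \<in> carrier G" for x
    by (simp add: rep_def)
  then show ?thesis
    by (intro homI) (simp_all add: rep_mult)
qed

lemma inj_rep:
  assumes kernel: "\<And>k v. g [^] (k::int) = \<tau> v \<Longrightarrow> k = 0 \<and> v = 0"
  shows "inj rep"
proof (rule injI)
  fix x y
  assume eq: "rep x = rep y"
  obtain k v l w where xy: "x = (k, v)" "y = (l, w)"
    by (cases x, cases y)
  \<comment> \<open>The source is not known to be a group, so rep y is cancelled by hand.\<close>
  have shift: "\<tau> (- w) \<otimes> rep (k', v') \<otimes> g [^] (- l) = \<tau> (v' - w) \<otimes> g [^] (k' - l)" for k' v'
  proof -
    have "\<tau> (v' - w) \<otimes> g [^] (k' - l) = \<tau> (- w + v') \<otimes> g [^] (k' + - l)"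
      by simp
    also have "\<dots> = \<tau> (- w) \<otimes> rep (k', v') \<otimes> g [^] (- l)"
      by (simp only: \<tau>_add int_pow_mult[OF g_closed]) (simp add: rep_def m_assoc)
    finally show ?thesis ..
  qed
  have "\<tau> (v - w) \<otimes> g [^] (k - l) = \<one>"
    using shift[of k v] shift[of l w] eq xy by (simp add: \<tau>_zero)
  then have "g [^] (k - l) \<otimes> \<tau> (v - w) = \<one>"
    by (rule inv_comm) simp_all
  then have "inv (\<tau> (v - w)) = g [^] (k - l)"
    by (rule inv_equality) simp_all
  then have "g [^] (k - l) = \<tau> (w - v)"
    by (simp add: inv_\<tau>)
  then show "x = y"
    using kernel xy by force
qed

lemma generate_eq_range_rep: "generate G (insert g (range (\<lambda>i. \<tau> (axis i 1)))) = range rep"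
proof
  show "generate G (insert g (range (\<lambda>i. \<tau> (axis i 1)))) \<subseteq> range rep"
  proof
    fix h
    assume "h \<in> generate G (insert g (range (\<lambda>i. \<tau> (axis i 1))))"
    have "rep (1, 0) = g" "rep (-1, 0) = inv g" "rep (0, v) = \<tau> v" for v
      by (simp_all add: rep_def \<tau>_zero int_pow_neg)
    then have in_range:
        "g \<in> range rep" "inv g \<in> range rep" "\<tau> v \<in> range rep" "inv (\<tau> v) \<in> range rep" for v
      by (metis rangeI inv_\<tau>)+
    from \<open>h \<in> generate G _\<close> show "h \<in> range rep"
    proof (induction rule: generate.induct)
      case one
      have "rep (0, 0) = \<one>"
        by (simp add: rep_def \<tau>_zero)
      then show ?case
        by (metis rangeI)
    next
      case (incl h)
      with in_range show ?case
        by blast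
    next
      case (inv h)
      with in_range show ?case
        by blast
    next
      case (eng h1 h2)
      then obtain x y where "h1 = rep x" "h2 = rep y"
        by blast
      then have "h1 \<otimes> h2 = rep (x \<otimes>\<^bsub>semidirect_Z (transpose T)\<^esub> y)"
        by (simp add: rep_mult)
      then show ?case
        by (rule range_eqI)
    qed
  qed
next
  let ?H = "generate G (insert g (range (\<lambda>i. \<tau> (axis i 1))))"
  have sub: "subgroup ?H G"
    by (rule generate_is_subgroup) auto
  have "\<tau> v \<in> ?H" for v
  proof (induction v rule: int_vec_induct)
    case zero
    then show ?case
      using subgroup.one_closed[OF sub] by (simp add: \<tau>_zero)
  next
    case (add v w)
    then show ?case
      using subgroup.m_closed[OF sub] by (simp add: \<tau>_add)
  next
    case (neg v)
    then show ?case
      using subgroup.m_inv_closed[OF sub] by (simp add: inv_\<tau>[symmetric])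
  next
    case (axis i)
    then show ?case
      by (simp add: generate.incl)
  qed
  moreover have "g [^] (k::int) \<in> ?H" for k
    using sub by (simp add: generate.incl subgroup_int_pow_closed)
  ultimately show "range rep \<subseteq> ?H"
    using subgroup.m_closed[OF sub] by (auto simp: rep_def)
qed

end

lemma restrict_in_BijGroup: "bij_betw f S S \<Longrightarrow> restrict f S \<in> carrier (BijGroup S)"
  by (simp add: BijGroup_def Bij_def)

lemma BijGroup_mult_restrict:
  assumes "bij_betw f S S" "bij_betw g S S"
  shows "restrict f S \<otimes>\<^bsub>BijGroup S\<^esub> restrict g S = restrict (f \<circ> g) S"
  using assms by (auto simp: BijGroup_def Bij_def compose_def fun_eq_iff bij_betwE)

lemma BijGroup_pow_restrict:
  assumes "bij_betw f S S"
  shows "restrict f S [^]\<^bsub>BijGroup S\<^esub> (m::nat) = restrict (f ^^ m) S"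
proof (induction m)
  case 0
  then show ?case by (simp add: BijGroup_def)
next
  case (Suc m)
  have "restrict f S [^]\<^bsub>BijGroup S\<^esub> Suc m = restrict (f ^^ m) S \<otimes>\<^bsub>BijGroup S\<^esub> restrict f S"
    by (simp only: nat_pow_Suc Suc.IH)
  also have "\<dots> = restrict (f ^^ m \<circ> f) S"
    by (rule BijGroup_mult_restrict[OF bij_betw_funpow[OF assms] assms])
  finally show ?case
    by (simp only: funpow_Suc_right)
qed

section \<open>Translations and the map \<open>g_zero\<close>\<close>

definition transl :: "nat \<Rightarrow> real^'m \<Rightarrow> (nat \<Rightarrow> complex^'m) \<Rightarrow> int^'m \<Rightarrow>
    complex \<times> (nat \<Rightarrow> complex) \<Rightarrow> complex \<times> (nat \<Rightarrow> complex)" where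
  "transl n a b v = (\<lambda>(w, z). (w + complex_of_real (int_pairing v a),
       \<lambda>j. if j < n then z j + int_pairing v (b j) else 0))"

lemma transl_axis: "transl n a b (axis i 1) = g_trans n a b i"
  by (auto simp: transl_def g_trans_def fun_eq_iff)

lemma transl_in_HC_domain: "p \<in> HC_domain n \<Longrightarrow> transl n a b v p \<in> HC_domain n"
  by (cases p) (simp add: transl_def HC_domain_def)

lemma transl_transl: "p \<in> HC_domain n \<Longrightarrow> transl n a b v (transl n a b w p) = transl n a b (v + w) p"
  by (cases p) (simp add: transl_def int_pairing_add fun_eq_iff algebra_simps)

lemma transl_zero: "p \<in> HC_domain n \<Longrightarrow> transl n a b 0 p = p"
  by (cases p) (auto simp: transl_def HC_domain_def fun_eq_iff)

lemma bij_transl: "bij_betw (transl n a b v) (HC_domain n) (HC_domain n)"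
  by (rule bij_betw_byWitness[where f' = "transl n a b (- v)"])
    (auto simp: transl_transl transl_zero transl_in_HC_domain)

lemma g_zero_in_HC_domain: "\<alpha> > 0 \<Longrightarrow> p \<in> HC_domain n \<Longrightarrow> g_zero n \<alpha> R p \<in> HC_domain n"
  by (cases p) (simp add: g_zero_def HC_domain_def)

lemma fst_g_zero_pow: "fst ((g_zero n \<alpha> R ^^ m) p) = complex_of_real \<alpha> ^ m * fst p"
proof (induction m)
  case (Suc m)
  then show ?case
    by (cases "(g_zero n \<alpha> R ^^ m) p") (simp add: g_zero_def)
qed simp

lemma g_zero_left_inverse:
  assumes "\<alpha> \<noteq> 0" and SR: "\<And>k j. k < n \<Longrightarrow> j < n \<Longrightarrow> (\<Sum>l<n. S k l * R l j) = (if k = j then 1 else 0)"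
    and "p \<in> HC_domain n"
  shows "g_zero n \<alpha> R (g_zero n (inverse \<alpha>) S p) = p"
proof -
  obtain w z where p: "p = (w, z)" and z: "\<And>j. j \<ge> n \<Longrightarrow> z j = 0"
    using assms(3) by (cases p) (auto simp: HC_domain_def)
  have "(\<Sum>l<n. R l j * (\<Sum>k<n. S k l * z k)) = z j" if "j < n" for j
  proof -
    have "(\<Sum>l<n. R l j * (\<Sum>k<n. S k l * z k)) = (\<Sum>l<n. \<Sum>k<n. S k l * R l j * z k)"
      by (simp add: sum_distrib_left algebra_simps)
    also have "\<dots> = (\<Sum>k<n. (\<Sum>l<n. S k l * R l j) * z k)"
      by (subst sum.swap) (simp add: sum_distrib_right)
    also have "\<dots> = (\<Sum>k<n. if k = j then z j else 0)"
      using that by (intro sum.cong) (simp_all add: SR)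
    finally show ?thesis
      using that by simp
  qed
  then show ?thesis
    using assms(1) z by (auto simp: p g_zero_def fun_eq_iff not_less)
qed

lemma bij_g_zero:
  assumes "\<alpha> > 0"
    and SR: "\<And>k j. k < n \<Longrightarrow> j < n \<Longrightarrow> (\<Sum>l<n. S k l * R l j) = (if k = j then 1 else 0)"
    and RS: "\<And>k j. k < n \<Longrightarrow> j < n \<Longrightarrow> (\<Sum>l<n. R k l * S l j) = (if k = j then 1 else 0)"
  shows "bij_betw (g_zero n \<alpha> R) (HC_domain n) (HC_domain n)"
proof (rule bij_betw_byWitness[where f' = "g_zero n (inverse \<alpha>) S"])
  show "\<forall>p\<in>HC_domain n. g_zero n (inverse \<alpha>) S (g_zero n \<alpha> R p) = p"
    using g_zero_left_inverse[of "inverse \<alpha>" n R S] assms(1) RS by simp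
  show "\<forall>p\<in>HC_domain n. g_zero n \<alpha> R (g_zero n (inverse \<alpha>) S p) = p"
    using g_zero_left_inverse[of \<alpha> n S R] assms(1) SR by simp
  show "g_zero n \<alpha> R ` HC_domain n \<subseteq> HC_domain n"
    using assms(1) g_zero_in_HC_domain by blast
  show "g_zero n (inverse \<alpha>) S ` HC_domain n \<subseteq> HC_domain n"
    using assms(1) g_zero_in_HC_domain[of "inverse \<alpha>"] by (simp add: image_subset_iff)
qed

section \<open>The isomorphism\<close>

locale GM_setting =
  fixes n :: nat and M :: "int^'m^'m" and \<alpha> :: real and a :: "real^'m"
    and b :: "nat \<Rightarrow> complex^'m" and R :: "nat \<Rightarrow> nat \<Rightarrow> complex"
  assumes dim: "CARD('m) = 2 * n + 1"
    and det_M: "det M = 1"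
    and \<alpha>_pos: "\<alpha> > 0" and \<alpha>_ne_1: "\<alpha> \<noteq> 1"
    and a_nonzero: "a \<noteq> 0" and a_eigenvector: "real_mat M *v a = \<alpha> *\<^sub>R a"
    and b_in_W: "\<And>j. j < n \<Longrightarrow> b j \<in> W_space M"
    and b_independent: "\<And>c. (\<Sum>j<n. c j *s b j) = 0 \<Longrightarrow> \<forall>j<n. c j = 0"
    and b_spans_W: "\<And>v. v \<in> W_space M \<Longrightarrow> \<exists>c. v = (\<Sum>j<n. c j *s b j)"
    and R_matrix: "\<And>j. j < n \<Longrightarrow> cplx_mat M *v b j = (\<Sum>l<n. R l j *s b l)"
begin

definition a_cplx :: "complex^'m" where
  "a_cplx = (\<chi> i. complex_of_real (a $ i))"

definition basis_family :: "nat \<Rightarrow> complex^'m" where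
  "basis_family i = (if i < n then b i else if i < 2 * n then vec_cnj (b (i - n)) else a_cplx)"

lemma a_cplx_gen_eig: "a_cplx \<in> gen_eig (cplx_mat M) (complex_of_real \<alpha>)"
proof -
  have "(cplx_mat M *v a_cplx) $ i = complex_of_real ((real_mat M *v a) $ i)" for i
    by (simp add: real_mat_def cplx_mat_def a_cplx_def matrix_vector_mult_def of_real_sum)
  then have "cplx_mat M *v a_cplx = complex_of_real \<alpha> *s a_cplx"
    using a_eigenvector by (simp add: vec_eq_iff a_cplx_def)
  then have "(mat_shift (cplx_mat M) (complex_of_real \<alpha>) ^^ 1) a_cplx = 0"
    by (simp add: mat_shift_def)
  then show ?thesis
    unfolding gen_eig_def by blast
qed

lemma basis_family_independent:
  assumes "(\<Sum>i<2 * n + 1. c i *s basis_family i) = 0"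
  shows "\<forall>i<2 * n + 1. c i = 0"
proof -
  define x where "x = (\<Sum>j<n. c j *s b j)"
  define y where "y = (\<Sum>j<n. cnj (c (n + j)) *s b j)"
  have "(\<Sum>i<2 * n + 1. c i *s basis_family i) = c (2 * n) *s a_cplx + x + vec_cnj y"
    by (simp add: mult_2 sum_lessThan_add basis_family_def x_def y_def vec_cnj_sum vec_cnj_scale)
  then have sum0: "c (2 * n) *s a_cplx + x + vec_cnj y = 0"
    using assms by simp
  have "x \<in> W_space M" "y \<in> W_space M"
    unfolding x_def y_def W_space_eq using b_in_W
    by (auto simp: W_space_eq intro!: gen_eig_sum_sum gen_eig_sum_scale)
  then have "c (2 * n) *s a_cplx = 0 \<and> x = 0 \<and> y = 0"
    using sum0 unfolding W_space_eq
    by (intro real_gen_eig_direct_sum[where \<alpha> = "complex_of_real \<alpha>"])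
      (simp_all add: cnj_cplx_mat gen_eig_scale a_cplx_gen_eig)
  moreover have "a_cplx \<noteq> 0"
    using a_nonzero by (simp add: a_cplx_def vec_eq_iff)
  ultimately have "c (2 * n) = 0" "\<forall>j<n. c j = 0" "\<forall>j<n. c (n + j) = 0"
    using b_independent[of c] b_independent[of "\<lambda>j. cnj (c (n + j))"]
    by (auto simp: x_def y_def)
  show ?thesis
  proof (intro allI impI)
    fix i
    assume "i < 2 * n + 1"
    then have "i < n \<or> (n \<le> i \<and> i < 2 * n) \<or> i = 2 * n"
      by linarith
    then show "c i = 0"
      using \<open>c (2 * n) = 0\<close> \<open>\<forall>j<n. c j = 0\<close> \<open>\<forall>j<n. c (n + j) = 0\<close>[rule_format, of "i - n"]
      by auto
  qed
qed

lemma int_pairing_a_b_eq_0_imp_zero: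
  assumes "int_pairing v a = 0" and "\<And>j. j < n \<Longrightarrow> int_pairing v (b j) = 0"
  shows "v = 0"
proof (rule int_pairing_eq_0_imp_zero)
  show "vec.span (basis_family ` {..<2 * n + 1}) = UNIV"
    using dim basis_family_independent by (intro span_image_eq_UNIV) auto
  show "int_pairing v x = 0" if "x \<in> basis_family ` {..<2 * n + 1}" for x
    using that assms
    by (auto simp: basis_family_def int_pairing_vec_cnj a_cplx_def int_pairing_of_real)
qed

lemma exists_inverse_coefficients:
  obtains S where
    "\<And>k j. k < n \<Longrightarrow> j < n \<Longrightarrow> (\<Sum>l<n. S k l * R l j) = (if k = j then 1 else 0)"
    "\<And>k j. k < n \<Longrightarrow> j < n \<Longrightarrow> (\<Sum>l<n. R k l * S l j) = (if k = j then 1 else 0)"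
proof -
  have "invertible (cplx_mat M)"
    using det_M by (simp add: invertible_det_nz det_cplx_mat)
  then obtain D where D: "cplx_mat M ** D = mat 1" "D ** cplx_mat M = mat 1"
    unfolding invertible_def by blast
  \<comment> \<open>The inverse of M commutes with M, so it preserves W, which the b j span.\<close>
  have "D *v b j \<in> W_space M" if "j < n" for j
    using b_in_W[OF that] D unfolding W_space_eq
    by (intro gen_eig_sum_invariant) simp_all
  then have "\<forall>j. \<exists>c. j < n \<longrightarrow> D *v b j = (\<Sum>l<n. c l *s b l)"
    using b_spans_W by blast
  then obtain c where c: "\<And>j. j < n \<Longrightarrow> D *v b j = (\<Sum>l<n. c j l *s b l)"
    by metis
  show ?thesis
  proof (rule that[of "\<lambda>l j. c j l"])
    show "(\<Sum>l<n. c l k * R l j) = (if k = j then 1 else 0)" if "k < n" "j < n" for k j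
      using b_independent c R_matrix D(2) that by (rule coefficient_matrix_mult)
    show "(\<Sum>l<n. R k l * c j l) = (if k = j then 1 else 0)" if "k < n" "j < n" for k j
      using b_independent R_matrix c D(1) that by (rule coefficient_matrix_mult)
  qed
qed

lemma bij_g_zero_HC_domain: "bij_betw (g_zero n \<alpha> R) (HC_domain n) (HC_domain n)"
  using \<alpha>_pos by (rule exists_inverse_coefficients[OF bij_g_zero])

lemma g_zero_transl:
  assumes "p \<in> HC_domain n"
  shows "g_zero n \<alpha> R (transl n a b w p) = transl n a b (transpose M *v w) (g_zero n \<alpha> R p)"
proof -
  have "int_pairing (transpose M *v w) a = int_pairing w (real_mat M *v a)"
    unfolding real_mat_def by (rule int_pairing_transpose)
  also have "\<dots> = \<alpha> * int_pairing w a"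
    using a_eigenvector by (simp add: int_pairing_def sum_distrib_left algebra_simps)
  finally have a: "int_pairing (transpose M *v w) a = \<alpha> * int_pairing w a" .
  have b: "int_pairing (transpose M *v w) (b j) = (\<Sum>l<n. R l j * int_pairing w (b l))"
    if "j < n" for j
  proof -
    have "int_pairing (transpose M *v w) (b j) = int_pairing w (cplx_mat M *v b j)"
      unfolding cplx_mat_def by (rule int_pairing_transpose)
    then show ?thesis
      using R_matrix[OF that] by (simp add: int_pairing_sum_right)
  qed
  from a b show ?thesis
    by (cases p) (auto simp: transl_def g_zero_def fun_eq_iff algebra_simps sum.distrib
        sum_distrib_left)
qed

definition transl_perm ::
    "int^'m \<Rightarrow> complex \<times> (nat \<Rightarrow> complex) \<Rightarrow> complex \<times> (nat \<Rightarrow> complex)" where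
  "transl_perm v = restrict (transl n a b v) (HC_domain n)"

definition g0_perm :: "complex \<times> (nat \<Rightarrow> complex) \<Rightarrow> complex \<times> (nat \<Rightarrow> complex)" where
  "g0_perm = restrict (g_zero n \<alpha> R) (HC_domain n)"

sublocale BG: semidirect_rep "BijGroup (HC_domain n)" "transpose M" transl_perm g0_perm
proof (intro semidirect_rep.intro group_BijGroup semidirect_rep_axioms.intro)
  show "invertible (transpose M)"
    using det_M by (simp add: invertible_if_det_eq_1 det_transpose)
  show "transl_perm v \<in> carrier (BijGroup (HC_domain n))" for v
    unfolding transl_perm_def using bij_transl by (rule restrict_in_BijGroup)
  show "g0_perm \<in> carrier (BijGroup (HC_domain n))"
    unfolding g0_perm_def using bij_g_zero_HC_domain by (rule restrict_in_BijGroup)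
  show "transl_perm (v + w) = transl_perm v \<otimes>\<^bsub>BijGroup (HC_domain n)\<^esub> transl_perm w" for v w
    unfolding transl_perm_def BijGroup_mult_restrict[OF bij_transl bij_transl]
    by (rule restrict_ext) (simp add: transl_transl)
  show "g0_perm \<otimes>\<^bsub>BijGroup (HC_domain n)\<^esub> transl_perm w
      = transl_perm (transpose M *v w) \<otimes>\<^bsub>BijGroup (HC_domain n)\<^esub> g0_perm" for w
    unfolding transl_perm_def g0_perm_def BijGroup_mult_restrict[OF bij_g_zero_HC_domain bij_transl]
      BijGroup_mult_restrict[OF bij_transl bij_g_zero_HC_domain]
    by (rule restrict_ext) (simp add: g_zero_transl)
qed

lemma g0_pow_eq_transl_imp_nat:
  assumes "g0_perm [^]\<^bsub>BijGroup (HC_domain n)\<^esub> (m::nat) = transl_perm v"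
  shows "m = 0 \<and> v = 0"
proof -
  let ?p = "(\<i>, \<lambda>_. 0) :: complex \<times> (nat \<Rightarrow> complex)"
  have p: "?p \<in> HC_domain n"
    by (simp add: HC_domain_def)
  have "restrict (g_zero n \<alpha> R ^^ m) (HC_domain n) = restrict (transl n a b v) (HC_domain n)"
    using assms
    by (simp add: g0_perm_def transl_perm_def BijGroup_pow_restrict[OF bij_g_zero_HC_domain])
  then have orbit: "(g_zero n \<alpha> R ^^ m) ?p = transl n a b v ?p"
    using fun_cong[of _ _ ?p] p by (metis restrict_apply')
  then have "complex_of_real (\<alpha> ^ m) * \<i> = \<i> + complex_of_real (int_pairing v a)"
    using fst_g_zero_pow[where n = n and \<alpha> = \<alpha> and R = R and m = m and p = ?p]
    by (simp add: transl_def of_real_power)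
  then have "int_pairing v a = 0" "\<alpha> ^ m = 1"
    by (simp_all add: complex_eq_iff)
  moreover from \<open>\<alpha> ^ m = 1\<close> have "m = 0"
    using power_eq_1_iff[of \<alpha> m] \<alpha>_pos \<alpha>_ne_1 by auto
  moreover have "int_pairing v (b j) = 0" if "j < n" for j
  proof -
    have "snd (transl n a b v ?p) j = 0"
      using orbit \<open>m = 0\<close> by simp
    then show ?thesis
      using that by (simp add: transl_def)
  qed
  ultimately show ?thesis
    using int_pairing_a_b_eq_0_imp_zero by blast
qed

lemma g0_pow_eq_transl_imp:
  assumes "g0_perm [^]\<^bsub>BijGroup (HC_domain n)\<^esub> (k::int) = transl_perm v"
  shows "k = 0 \<and> v = 0"
proof (cases k rule: int_cases2)
  case (nonneg m)
  then show ?thesis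
    using assms g0_pow_eq_transl_imp_nat by (simp add: int_pow_int)
next
  case (nonpos m)
  then have "inv\<^bsub>BijGroup (HC_domain n)\<^esub> (g0_perm [^]\<^bsub>BijGroup (HC_domain n)\<^esub> m) = transl_perm v"
    using assms by (simp add: BG.int_pow_neg_int)
  then have "g0_perm [^]\<^bsub>BijGroup (HC_domain n)\<^esub> m = transl_perm (- v)"
    by (metis BG.inv_\<tau> BG.inv_inv BG.nat_pow_closed BG.g_closed)
  then show ?thesis
    using nonpos g0_pow_eq_transl_imp_nat[of m "- v"] by simp
qed

theorem G_M_iso: "G_M n \<alpha> R a b \<cong> semidirect_Z M"
proof -
  have gens: "insert (restrict (g_zero n \<alpha> R) (HC_domain n))
      ((\<lambda>i. restrict (g_trans n a b i) (HC_domain n)) ` UNIV)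
    = insert g0_perm (range (\<lambda>i. transl_perm (axis i 1)))"
    by (simp add: g0_perm_def transl_perm_def transl_axis)
  have carrier: "carrier (G_M n \<alpha> R a b) = range BG.rep"
    by (simp add: G_M_def Let_def gens BG.generate_eq_range_rep)
  moreover have "mult (G_M n \<alpha> R a b) = mult (BijGroup (HC_domain n))"
    by (simp add: G_M_def Let_def)
  ultimately have "BG.rep \<in> hom (semidirect_Z M) (G_M n \<alpha> R a b)"
    using BG.rep_hom by (auto simp: hom_def)
  moreover have "bij_betw BG.rep (carrier (semidirect_Z M)) (carrier (G_M n \<alpha> R a b))"
    using BG.inj_rep[OF g0_pow_eq_transl_imp] by (simp add: carrier semidirect_Z_def bij_betw_def)
  ultimately show ?thesis
    by (rule is_iso_of_bij_hom) (simp add: semidirect_Z_def)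
qed

end

theorem proposition2p4:
  fixes n :: nat and M :: "int^'m^'m" and \<alpha> :: real and a :: "real^'m"
    and b :: "nat \<Rightarrow> complex^'m" and R :: "nat \<Rightarrow> nat \<Rightarrow> complex"
  assumes n_ge: "n \<ge> 1"
    and dim: "CARD('m) = 2 * n + 1"
    and detM: "det M = 1"
    and alpha_eig: "is_eigenvalue_c M (complex_of_real \<alpha>)"
    and only_real: "\<And>e. is_eigenvalue_c M e \<Longrightarrow> Im e = 0 \<Longrightarrow> e = complex_of_real \<alpha>"
    and alpha_pos: "\<alpha> > 0" and alpha_ne1: "\<alpha> \<noteq> 1"
    and alpha_simple: "Polynomial.order (complex_of_real \<alpha>) (charpoly_c M) = 1"
    and a_eig: "a \<noteq> 0" "real_mat M *v a = \<alpha> *\<^sub>R a"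
    and b_in: "\<And>j. j < n \<Longrightarrow> b j \<in> W_space M"
    and b_indep: "\<And>c. (\<Sum>j<n. c j *s b j) = 0 \<Longrightarrow> \<forall>j<n. c j = 0"
    and b_span: "\<And>v. v \<in> W_space M \<Longrightarrow> \<exists>c. v = (\<Sum>j<n. c j *s b j)"
    and R_def: "\<And>j. j < n \<Longrightarrow> cplx_mat M *v b j = (\<Sum>l<n. R l j *s b l)"
  shows "G_M n \<alpha> R a b \<cong> semidirect_Z M"
proof -
  interpret GM_setting n M \<alpha> a b R
    using dim detM alpha_pos alpha_ne1 a_eig b_in b_indep b_span R_def
    by unfold_locales auto
  show ?thesis
    by (rule G_M_iso)
qed

end
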